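(* For $\alpha\in[-1,1]$ let $\rho(\alpha)=\tfrac12(I+\alpha\sigma_z)=\tfrac12\begin{pmatrix}1+\alpha&0\\0&1-\alpha\end{pmatrix}$. Then for all $\alpha,\beta\in[-1,1]$ and $p\ge1$, $$D^p_{z,p}(\rho(\alpha),\rho(\beta))=2^{p-1}|\alpha-\beta|.$$
   Context: Qubit setting: $\mathcal{H}=\mathbb{C}^2$, $\mathcal{H}^*$ is identified with $\mathbb{C}^2$ via the dual basis, and $A^T$ is the usual matrix transpose; operators on $\mathcal{H}\otimes\mathcal{H}^*$ are $4\times4$ matrices in the basis $e_1\otimes e_1^*,e_1\otimes e_2^*,e_2\otimes e_1^*,e_2\otimes e_2^*$. $\sigma_z=\begin{pmatrix}1&0\\0&-1\end{pmatrix}$. The set of couplings of states $\rho,\omega$ is $\mathcal{C}(\rho,\omega)=\{\Pi\in\mathcal{S}(\mathcal{H}\otimes\mathcal{H}^* ):\mathrm{tr}_{\mathcal{H}^*}[\Pi]=\omega,\ \mathrm{tr}_{\mathcal{H}}[\Pi]=\rho^T\}$. For $p\ge1$, $C_{z,p}=|\sigma_z\otimes I^T-I\otimes\sigma_z^T|^p=\mathrm{diag}(0,2^p,2^p,0)$, and $D_{z,p}(\rho,\omega)=\big(\min_{\Pi\in\mathcal{C}(\rho,\omega)}\mathrm{tr}[\Pi C_{z,p}]\big)^{1/p}$. *)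

theory Defs
  imports Complex_Main "HOL-Library.Complex_Order"
begin

text \<open>Matrices are represented as functions nat => nat => complex; only the
entries with indices below the dimension matter. On H (x) H* = C^2 (x) C^2 the
basis vector e_i (x) e_j^* (i,j in {0,1}) has index 2*i+j.\<close>

type_synonym cmat = "nat \<Rightarrow> nat \<Rightarrow> complex"

definition sigma_z :: cmat where
  "sigma_z i j = (if i = j then (if i = 0 then 1 else -1) else 0)"

definition id2 :: cmat where
  "id2 i j = (if i = j then 1 else 0)"

definition transp :: "cmat \<Rightarrow> cmat" where
  "transp A i j = A j i"

definition mtrace :: "nat \<Rightarrow> cmat \<Rightarrow> complex" where
  "mtrace n A = (\<Sum>i<n. A i i)"

definition mmult :: "nat \<Rightarrow> cmat \<Rightarrow> cmat \<Rightarrow> cmat" where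
  "mmult n A B i j = (\<Sum>k<n. A i k * B k j)"

definition is_state :: "nat \<Rightarrow> cmat \<Rightarrow> bool" where
  "is_state n A \<longleftrightarrow>
     (\<forall>i<n. \<forall>j<n. A j i = cnj (A i j)) \<and>
     (\<forall>v :: nat \<Rightarrow> complex. 0 \<le> (\<Sum>i<n. \<Sum>j<n. cnj (v i) * A i j * v j)) \<and>
     mtrace n A = 1"

definition ptrace_dual :: "cmat \<Rightarrow> cmat" where
  "ptrace_dual P i k = (\<Sum>j<2. P (2*i+j) (2*k+j))"

definition ptrace_H :: "cmat \<Rightarrow> cmat" where
  "ptrace_H P j l = (\<Sum>i<2. P (2*i+j) (2*i+l))"

definition couplings :: "cmat \<Rightarrow> cmat \<Rightarrow> cmat set" where
  "couplings \<rho> \<omega> = {P. is_state 4 P \<and>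
      (\<forall>i<2. \<forall>k<2. ptrace_dual P i k = \<omega> i k) \<and>
      (\<forall>j<2. \<forall>l<2. ptrace_H P j l = transp \<rho> j l)}"

text \<open>C_{z,p} = |sigma_z (x) I^T - I (x) sigma_z^T|^p; the operator inside is diagonal
with entry sigma_z(i,i) - sigma_z(j,j) at index 2*i+j, so its p-th absolute power
is diagonal with the p-th powers of the absolute values of these entries.\<close>
definition Czp :: "real \<Rightarrow> cmat" where
  "Czp p a b = (if a = b then
      complex_of_real (cmod (sigma_z (a div 2) (a div 2) * transp id2 (a mod 2) (a mod 2)
                    - id2 (a div 2) (a div 2) * transp sigma_z (a mod 2) (a mod 2)) powr p)
      else 0)"

text \<open>D_{z,p}(rho, omega) = (min over couplings of tr[Pi C_{z,p}])^(1/p).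
The minimum is expressed as an infimum of the (real) values of the trace.\<close>
definition Dzp :: "real \<Rightarrow> cmat \<Rightarrow> cmat \<Rightarrow> real" where
  "Dzp p \<rho> \<omega> = (INF P \<in> couplings \<rho> \<omega>. Re (mtrace 4 (mmult 4 P (Czp p)))) powr (1/p)"

definition rho_a :: "real \<Rightarrow> cmat" where
  "rho_a \<alpha> i j = (1/2) * (id2 i j + complex_of_real \<alpha> * sigma_z i j)"

end

theory Submission
  imports Defs
begin

text \<open>The cost operator is diagonal with weight 2^p exactly on the two "flip" basis vectors
e_0 (x) e_1^* and e_1 (x) e_0^*, so the cost of a coupling is 2^p times the mass it puts there.
The diagonal marginals of a coupling of rho(alpha) and rho(beta) force these two masses to
differ by (beta - alpha)/2, so by positivity their sum is at least |alpha - beta|/2. The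
diagonal coupling that moves only the excess mass in one direction attains this bound.\<close>

lemma sum_lessThan_2: "(\<Sum>i<2. f i) = f 0 + f 1"
  for f :: "nat \<Rightarrow> 'a::comm_monoid_add"
  by (simp add: numeral_eq_Suc)

lemma sum_lessThan_4: "(\<Sum>i<4. f i) = f 0 + f 1 + f 2 + f 3"
  for f :: "nat \<Rightarrow> 'a::comm_monoid_add"
  by (simp add: numeral_eq_Suc add.assoc)

lemma is_state_diag_nonneg:
  assumes "is_state n P" "a < n"
  shows "0 \<le> P a a"
proof -
  have cnj_of_bool: "cnj (of_bool b) = (of_bool b :: complex)" for b
    by (cases b) simp_all
  have "0 \<le> (\<Sum>i<n. \<Sum>j<n. cnj (of_bool (i = a)) * P i j * of_bool (j = a))"
    using assms(1) unfolding is_state_def by (elim conjE allE)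
  also have "\<dots> = (\<Sum>i<n. of_bool (i = a) * (\<Sum>j<n. P i j * of_bool (j = a)))"
    by (simp only: cnj_of_bool mult.assoc sum_distrib_left)
  also have "\<dots> = P a a"
    using assms(2) by (simp add: Collect_conv_if Int_insert_right)
  finally show ?thesis .
qed

definition diag_mat :: "(nat \<Rightarrow> real) \<Rightarrow> cmat" where
  "diag_mat d i j = (if i = j then complex_of_real (d i) else 0)"

lemma is_state_diag_mat:
  assumes "\<And>i. i < n \<Longrightarrow> 0 \<le> d i" "(\<Sum>i<n. d i) = 1"
  shows "is_state n (diag_mat d)"
  unfolding is_state_def
proof (intro conjI allI impI)
  fix v :: "nat \<Rightarrow> complex"
  have row: "(\<Sum>j<n. cnj (v i) * diag_mat d i j * v j) = complex_of_real (d i * (cmod (v i))\<^sup>2)"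
    if "i < n" for i
  proof -
    have "(\<Sum>j<n. cnj (v i) * diag_mat d i j * v j) = cnj (v i) * complex_of_real (d i) * v i"
      using that by (simp add: diag_mat_def if_distrib[where f = "\<lambda>x. _ * x"]
          if_distrib[where f = "\<lambda>x. x * _"] cong: if_cong)
    also have "\<dots> = complex_of_real (d i * (cmod (v i))\<^sup>2)"
      by (simp add: mult_ac flip: complex_norm_square)
    finally show ?thesis .
  qed
  have "(\<Sum>i<n. \<Sum>j<n. cnj (v i) * diag_mat d i j * v j)
      = (\<Sum>i<n. complex_of_real (d i * (cmod (v i))\<^sup>2))"
    using row by simp
  also have "\<dots> = complex_of_real (\<Sum>i<n. d i * (cmod (v i))\<^sup>2)"
    by simp
  also have "0 \<le> \<dots>"
    using assms(1) by (auto simp: less_eq_complex_def intro!: sum_nonneg)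
  finally show "0 \<le> (\<Sum>i<n. \<Sum>j<n. cnj (v i) * diag_mat d i j * v j)" .
next
  show "mtrace n (diag_mat d) = 1"
    using assms(2) by (simp add: mtrace_def diag_mat_def flip: of_real_sum)
qed (simp add: diag_mat_def)

lemma mtrace_mmult_Czp: "mtrace 4 (mmult 4 P (Czp p)) = complex_of_real (2 powr p) * (P 1 1 + P 2 2)"
  by (simp add: mtrace_def mmult_def sum_lessThan_4 Czp_def sigma_z_def id2_def transp_def
      distrib_left)

lemma rho_a_eq:
  "rho_a x i j = (if i = j then complex_of_real ((if i = 0 then 1 + x else 1 - x) / 2) else 0)"
  by (simp add: rho_a_def id2_def sigma_z_def field_simps)

lemma couplings_rho_a_diag:
  assumes "P \<in> couplings (rho_a \<alpha>) (rho_a \<beta>)"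
  shows "2 * Re (P 0 0 + P 1 1) = 1 + \<beta>" "2 * Re (P 0 0 + P 2 2) = 1 + \<alpha>"
proof -
  have "ptrace_dual P 0 0 = rho_a \<beta> 0 0" "ptrace_H P 0 0 = transp (rho_a \<alpha>) 0 0"
    using assms by (simp_all add: couplings_def)
  then have "P 0 0 + P 1 1 = complex_of_real ((1 + \<beta>) / 2)"
    "P 0 0 + P 2 2 = complex_of_real ((1 + \<alpha>) / 2)"
    by (simp_all add: ptrace_dual_def ptrace_H_def sum_lessThan_2 transp_def rho_a_eq)
  then show "2 * Re (P 0 0 + P 1 1) = 1 + \<beta>" "2 * Re (P 0 0 + P 2 2) = 1 + \<alpha>"
    by (auto simp: complex_eq_iff)
qed

lemma coupling_cost_lower_bound:
  assumes "P \<in> couplings (rho_a \<alpha>) (rho_a \<beta>)"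
  shows "2 powr (p - 1) * \<bar>\<alpha> - \<beta>\<bar> \<le> Re (mtrace 4 (mmult 4 P (Czp p)))"
proof -
  have state: "is_state 4 P"
    using assms by (simp add: couplings_def)
  have "0 \<le> Re (P 1 1)" "0 \<le> Re (P 2 2)"
    using is_state_diag_nonneg[OF state] by (simp_all add: less_eq_complex_def)
  moreover note couplings_rho_a_diag[OF assms]
  ultimately have "\<bar>\<alpha> - \<beta>\<bar> \<le> 2 * (Re (P 1 1) + Re (P 2 2))"
    by auto
  then have "2 powr (p - 1) * \<bar>\<alpha> - \<beta>\<bar> \<le> 2 powr (p - 1) * (2 * (Re (P 1 1) + Re (P 2 2)))"
    by (rule mult_left_mono) simp
  also have "\<dots> = Re (mtrace 4 (mmult 4 P (Czp p)))"
    by (simp add: mtrace_mmult_Czp powr_diff)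
  finally show ?thesis .
qed

lemma ptrace_dual_diag_mat:
  "ptrace_dual (diag_mat w) i k = (if i = k then complex_of_real (w (2 * i) + w (2 * i + 1)) else 0)"
  unfolding ptrace_dual_def diag_mat_def by (simp add: numeral_eq_Suc)

lemma ptrace_H_diag_mat:
  "ptrace_H (diag_mat w) j l = (if j = l then complex_of_real (w j + w (j + 2)) else 0)"
  unfolding ptrace_H_def diag_mat_def by (simp add: numeral_eq_Suc)

definition monotone_coupling_weights :: "real \<Rightarrow> real \<Rightarrow> nat \<Rightarrow> real" where
  "monotone_coupling_weights \<alpha> \<beta> k =
     [min (1 + \<alpha>) (1 + \<beta>), max (\<beta> - \<alpha>) 0, max (\<alpha> - \<beta>) 0, min (1 - \<alpha>) (1 - \<beta>)] ! k / 2"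

definition monotone_coupling :: "real \<Rightarrow> real \<Rightarrow> cmat" where
  "monotone_coupling \<alpha> \<beta> = diag_mat (monotone_coupling_weights \<alpha> \<beta>)"

lemma monotone_coupling_weights_nonneg:
  assumes "-1 \<le> \<alpha>" "\<alpha> \<le> 1" "-1 \<le> \<beta>" "\<beta> \<le> 1" "k < 4"
  shows "0 \<le> monotone_coupling_weights \<alpha> \<beta> k"
proof -
  consider "k = 0" | "k = 1" | "k = 2" | "k = 3"
    using \<open>k < 4\<close> by linarith
  then show ?thesis
    using assms(1-4) by cases (simp_all add: monotone_coupling_weights_def)
qed

lemma monotone_coupling_weights_marginals:
  fixes \<alpha> \<beta> :: real
  defines "w \<equiv> monotone_coupling_weights \<alpha> \<beta>"
  shows "w 0 + w 1 = (1 + \<beta>) / 2" "w 2 + w 3 = (1 - \<beta>) / 2"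
    "w 0 + w 2 = (1 + \<alpha>) / 2" "w 1 + w 3 = (1 - \<alpha>) / 2"
  by (simp_all add: w_def monotone_coupling_weights_def min_def max_def)

lemma monotone_coupling_mem:
  assumes "-1 \<le> \<alpha>" "\<alpha> \<le> 1" "-1 \<le> \<beta>" "\<beta> \<le> 1"
  shows "monotone_coupling \<alpha> \<beta> \<in> couplings (rho_a \<alpha>) (rho_a \<beta>)"
proof -
  let ?w = "monotone_coupling_weights \<alpha> \<beta>"
  note marginals = monotone_coupling_weights_marginals[of \<alpha> \<beta>]
  have "is_state 4 (diag_mat ?w)"
  proof (rule is_state_diag_mat)
    show "(\<Sum>k<4. ?w k) = 1"
      using marginals(1,2) by (simp add: sum_lessThan_4)
  qed (rule monotone_coupling_weights_nonneg[OF assms])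
  moreover have "ptrace_dual (diag_mat ?w) i k = rho_a \<beta> i k" if "i < 2" for i k
  proof -
    have "i = 0 \<or> i = 1"
      using \<open>i < 2\<close> by linarith
    then show ?thesis
      using marginals(1,2)
      by (auto simp: ptrace_dual_diag_mat rho_a_eq complex_eq_iff numeral_eq_Suc)
  qed
  moreover have "ptrace_H (diag_mat ?w) j l = transp (rho_a \<alpha>) j l" if "j < 2" for j l
  proof -
    have "j = 0 \<or> j = 1"
      using \<open>j < 2\<close> by linarith
    then show ?thesis
      using marginals(3,4)
      by (auto simp: ptrace_H_diag_mat transp_def rho_a_eq complex_eq_iff numeral_eq_Suc)
  qed
  ultimately show ?thesis
    by (simp add: couplings_def monotone_coupling_def)
qed

lemma monotone_coupling_cost:
  "Re (mtrace 4 (mmult 4 (monotone_coupling \<alpha> \<beta>) (Czp p))) = 2 powr (p - 1) * \<bar>\<alpha> - \<beta>\<bar>"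
proof -
  have "monotone_coupling_weights \<alpha> \<beta> 1 + monotone_coupling_weights \<alpha> \<beta> 2 = \<bar>\<alpha> - \<beta>\<bar> / 2"
    by (simp add: monotone_coupling_weights_def max_def)
  then show ?thesis
    by (simp add: mtrace_mmult_Czp monotone_coupling_def diag_mat_def powr_diff flip: distrib_left)
qed

lemma optimal_coupling_cost_rho_a:
  assumes "-1 \<le> \<alpha>" "\<alpha> \<le> 1" "-1 \<le> \<beta>" "\<beta> \<le> 1"
  shows "(INF P \<in> couplings (rho_a \<alpha>) (rho_a \<beta>). Re (mtrace 4 (mmult 4 P (Czp p))))
           = 2 powr (p - 1) * \<bar>\<alpha> - \<beta>\<bar>"
proof (rule cInf_eq_minimum)
  show "2 powr (p - 1) * \<bar>\<alpha> - \<beta>\<bar>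
          \<in> (\<lambda>P. Re (mtrace 4 (mmult 4 P (Czp p)))) ` couplings (rho_a \<alpha>) (rho_a \<beta>)"
    using monotone_coupling_mem[OF assms]
    by (rule rev_image_eqI) (rule monotone_coupling_cost[symmetric])
next
  fix c assume "c \<in> (\<lambda>P. Re (mtrace 4 (mmult 4 P (Czp p)))) ` couplings (rho_a \<alpha>) (rho_a \<beta>)"
  then obtain P where c: "c = Re (mtrace 4 (mmult 4 P (Czp p)))"
    and P: "P \<in> couplings (rho_a \<alpha>) (rho_a \<beta>)"
    by (rule imageE)
  show "2 powr (p - 1) * \<bar>\<alpha> - \<beta>\<bar> \<le> c"
    unfolding c by (rule coupling_cost_lower_bound[OF P])
qed

theorem proposition3p9:
  fixes \<alpha> \<beta> p :: real
  assumes "-1 \<le> \<alpha>" "\<alpha> \<le> 1" "-1 \<le> \<beta>" "\<beta> \<le> 1" "1 \<le> p"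
  shows "(Dzp p (rho_a \<alpha>) (rho_a \<beta>)) powr p = 2 powr (p - 1) * \<bar>\<alpha> - \<beta>\<bar>"
proof -
  let ?m = "2 powr (p - 1) * \<bar>\<alpha> - \<beta>\<bar>"
  have "Dzp p (rho_a \<alpha>) (rho_a \<beta>) powr p = ?m powr (1 / p * p)"
    unfolding Dzp_def optimal_coupling_cost_rho_a[OF assms(1-4)] by (rule powr_powr)
  also have "1 / p * p = 1"
    using assms(5) by simp
  also have "?m powr 1 = ?m"
    by (rule powr_one) simp
  finally show ?thesis .
qed

end
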